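(* $\beta^c_1<\sqrt{3/2}<\beta^c_0$.
   Context: $\mathbb{N}=\{0,1,2,\dots\}$. For $t\ge 0$ let $q(t)=\lfloor t+1\rfloor/2$ if $\lfloor t\rfloor$ is odd and $q(t)=t-\lfloor t\rfloor/2$ if $\lfloor t\rfloor$ is even, and $p(t)=t+1-q(t)$. For $\beta\ge1$ let $\hat\sigma(t,\beta)\in(0,1)$ be the unique solution $\sigma$ of $\frac{p(t)\sigma}{\sqrt{1-\sigma^2}}+\frac{q(t)\sigma}{\sqrt{\beta^2-\sigma^2}}=1$, and $l(t,\beta)=\frac{p(t)}{\sqrt{1-\hat\sigma^2}}+\frac{\beta^2q(t)}{\sqrt{\beta^2-\hat\sigma^2}}-t-\sqrt2$. For $k\in\mathbb{N}$, $\delta(k,\beta)=l(2k+2,\beta)-l(2k,\beta)$, and $\beta^c_k$ is the unique number in $(1,\sqrt2)$ with $\delta(k,\beta^c_k)=0$ (well defined since $\beta\mapsto\delta(k,\beta)$ is strictly increasing on $[1,\infty)$ with $\delta(k,1)<0<\delta(k,\sqrt2)$). *)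

theory Defs
  imports "HOL-Analysis.Analysis"
begin

definition q_fun :: "real \<Rightarrow> real" where
  "q_fun t = (if odd \<lfloor>t\<rfloor> then real_of_int \<lfloor>t + 1\<rfloor> / 2
              else t - real_of_int \<lfloor>t\<rfloor> / 2)"

definition p_fun :: "real \<Rightarrow> real" where
  "p_fun t = t + 1 - q_fun t"

definition sigma_hat :: "real \<Rightarrow> real \<Rightarrow> real" where
  "sigma_hat t \<beta> = (THE \<sigma>. 0 < \<sigma> \<and> \<sigma> < 1 \<and>
      p_fun t * \<sigma> / sqrt (1 - \<sigma>\<^sup>2) + q_fun t * \<sigma> / sqrt (\<beta>\<^sup>2 - \<sigma>\<^sup>2) = 1)"

definition l_fun :: "real \<Rightarrow> real \<Rightarrow> real" where
  "l_fun t \<beta> = p_fun t / sqrt (1 - (sigma_hat t \<beta>)\<^sup>2)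
      + \<beta>\<^sup>2 * q_fun t / sqrt (\<beta>\<^sup>2 - (sigma_hat t \<beta>)\<^sup>2) - t - sqrt 2"

definition delta_fun :: "nat \<Rightarrow> real \<Rightarrow> real" where
  "delta_fun k \<beta> = l_fun (2 * real k + 2) \<beta> - l_fun (2 * real k) \<beta>"

definition beta_c :: "nat \<Rightarrow> real" where
  "beta_c k = (THE \<beta>. 1 < \<beta> \<and> \<beta> < sqrt 2 \<and> delta_fun k \<beta> = 0)"

end

theory Submission imports Defs begin

text \<open>
For \<open>p \<ge> 1\<close>, \<open>q \<ge> 0\<close>, \<open>b \<ge> 1\<close> the concave function
\<open>F(x) = x + p \<surd>(1 - x\<^sup>2) + q \<surd>(b\<^sup>2 - x\<^sup>2)\<close> has derivative \<open>1 - h(x)\<close>, where \<open>h(\<sigma>) = 1\<close> is the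
equation defining \<open>sigma_hat\<close>, and its tangent at \<open>s\<close> is
\<open>x (1 - h(s)) + p/\<surd>(1 - s\<^sup>2) + b\<^sup>2 q/\<surd>(b\<^sup>2 - s\<^sup>2)\<close>. Hence \<open>l(t,\<beta>) + t + \<surd>2\<close> is the maximum
\<open>L(p(t), q(t), \<beta>)\<close> of \<open>F\<close> on \<open>[0,1]\<close>: every value of \<open>F\<close> bounds it from below, and every
tangent intercept at a point with \<open>h \<ge> 1\<close> bounds it from above. As \<open>l(0,\<beta>) = 0\<close>,
\<open>\<delta>(0,\<beta>) = L(2,1,\<beta>) - 2 - \<surd>2\<close> and \<open>\<delta>(1,\<beta>) = L(3,2,\<beta>) - L(2,1,\<beta>) - 2\<close>. Both are continuous
(\<open>L\<close> is \<open>1/2\<close>-Hoelder in \<open>\<beta>\<close>) and strictly increasing (for \<open>\<delta>(1,\<cdot>)\<close> because the critical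
point of \<open>L(2,1,\<cdot>)\<close> stays below \<open>1/2\<close>), and such bounds at hand-picked points show that
\<open>\<delta>(0,\<cdot>)\<close> changes sign on \<open>[\<surd>(3/2), \<surd>2]\<close> and \<open>\<delta>(1,\<cdot>)\<close> on \<open>[1, \<surd>(3/2)]\<close>.
\<close>

definition sigma_lhs :: "real \<Rightarrow> real \<Rightarrow> real \<Rightarrow> real \<Rightarrow> real" where
  "sigma_lhs p q b s = p * s / sqrt (1 - s\<^sup>2) + q * s / sqrt (b\<^sup>2 - s\<^sup>2)"

definition profile :: "real \<Rightarrow> real \<Rightarrow> real \<Rightarrow> real \<Rightarrow> real" where
  "profile p q b x = x + p * sqrt (1 - x\<^sup>2) + q * sqrt (b\<^sup>2 - x\<^sup>2)"

definition tangent_intercept :: "real \<Rightarrow> real \<Rightarrow> real \<Rightarrow> real \<Rightarrow> real" where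
  "tangent_intercept p q b s = p / sqrt (1 - s\<^sup>2) + b\<^sup>2 * q / sqrt (b\<^sup>2 - s\<^sup>2)"

definition crit_point :: "real \<Rightarrow> real \<Rightarrow> real \<Rightarrow> real" where
  "crit_point p q b = (THE \<sigma>. 0 < \<sigma> \<and> \<sigma> < 1 \<and> sigma_lhs p q b \<sigma> = 1)"

definition peak :: "real \<Rightarrow> real \<Rightarrow> real \<Rightarrow> real" where
  "peak p q b = tangent_intercept p q b (crit_point p q b)"

lemma sqrt_diff_square_pos:
  assumes "a \<ge> 1" "0 \<le> s" "s < 1"
  shows "sqrt (a - s\<^sup>2) > 0"
proof -
  have "s\<^sup>2 < 1" using assms by (simp add: power_less_one_iff abs_less_iff)
  then show ?thesis using assms by simp
qed

lemma frac_sqrt_strict_mono: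
  assumes a: "a \<ge> 1" and x: "0 \<le> x" "x < y" "y < 1"
  shows "x / sqrt (a - x\<^sup>2) < y / sqrt (a - y\<^sup>2)"
proof -
  have py: "sqrt (a - y\<^sup>2) > 0" and px: "sqrt (a - x\<^sup>2) > 0"
    using sqrt_diff_square_pos[OF a] x by auto
  have "x\<^sup>2 \<le> y\<^sup>2" using x by (intro power_mono) auto
  then have "x * sqrt (a - y\<^sup>2) \<le> x * sqrt (a - x\<^sup>2)" using x by (simp add: mult_left_mono)
  also have "\<dots> < y * sqrt (a - x\<^sup>2)" using px x by simp
  finally show ?thesis using px py by (simp add: divide_simps)
qed

lemma sigma_lhs_strict_mono:
  assumes "p > 0" "q \<ge> 0" "b \<ge> 1" "0 \<le> x" "x < y" "y < 1"
  shows "sigma_lhs p q b x < sigma_lhs p q b y"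
proof -
  have b2: "b\<^sup>2 \<ge> 1" using assms(3) by (metis one_le_power)
  have "p * (x / sqrt (1 - x\<^sup>2)) < p * (y / sqrt (1 - y\<^sup>2))"
    using frac_sqrt_strict_mono[of 1 x y] assms by (intro mult_strict_left_mono) auto
  moreover have "q * (x / sqrt (b\<^sup>2 - x\<^sup>2)) \<le> q * (y / sqrt (b\<^sup>2 - y\<^sup>2))"
    using frac_sqrt_strict_mono[OF b2, of x y] assms by (intro mult_left_mono) auto
  ultimately show ?thesis unfolding sigma_lhs_def by simp
qed

lemma continuous_on_sigma_lhs:
  assumes "b \<ge> 1" "c < 1"
  shows "continuous_on {0..c} (sigma_lhs p q b)"
proof -
  have b2: "b\<^sup>2 \<ge> 1" using assms(1) by (metis one_le_power)
  have pos: "1 - s\<^sup>2 > 0 \<and> b\<^sup>2 - s\<^sup>2 > 0" if "s \<in> {0..c}" for s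
  proof -
    have "s\<^sup>2 < 1" using that assms by (simp add: power_less_one_iff abs_less_iff)
    then show ?thesis using b2 by simp
  qed
  then show ?thesis unfolding sigma_lhs_def by (intro continuous_intros) (auto dest!: pos)
qed

lemma crit_point_unique:
  assumes p: "p \<ge> 1" and q: "q \<ge> 0" and b: "b \<ge> 1"
  shows "\<exists>!\<sigma>. 0 < \<sigma> \<and> \<sigma> < 1 \<and> sigma_lhs p q b \<sigma> = 1"
proof -
  define c where "c = (sqrt (1/2) :: real)"
  have c: "0 < c" "c < 1" "sqrt (1 - c\<^sup>2) = c" unfolding c_def by (auto simp: real_sqrt_lt_1_iff)
  have "sqrt (b\<^sup>2 - c\<^sup>2) > 0" using b c by (intro sqrt_diff_square_pos) (auto simp: one_le_power)
  then have "q * c / sqrt (b\<^sup>2 - c\<^sup>2) \<ge> 0" using q c by simp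
  then have "sigma_lhs p q b 0 \<le> 1" "1 \<le> sigma_lhs p q b c"
    using p c unfolding sigma_lhs_def by auto
  then obtain s where s: "0 \<le> s" "s \<le> c" "sigma_lhs p q b s = 1"
    using IVT'[of "sigma_lhs p q b" 0 1 c] continuous_on_sigma_lhs[OF b c(2)] c by auto
  have "s \<noteq> 0" using s unfolding sigma_lhs_def by auto
  then have "0 < s \<and> s < 1 \<and> sigma_lhs p q b s = 1" using s c by auto
  moreover have "y = s" if "0 < y \<and> y < 1 \<and> sigma_lhs p q b y = 1" for y
    using sigma_lhs_strict_mono[of p q b y s] sigma_lhs_strict_mono[of p q b s y] p q b that s c
    by (cases y s rule: linorder_cases) auto
  ultimately show ?thesis by blast
qed

lemma crit_point:
  assumes "p \<ge> 1" "q \<ge> 0" "b \<ge> 1"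
  shows "0 < crit_point p q b" "crit_point p q b < 1" "sigma_lhs p q b (crit_point p q b) = 1"
  using theI'[OF crit_point_unique[OF assms]] unfolding crit_point_def by auto

text \<open>The tangent to \<open>u \<mapsto> \<surd>(a - u\<^sup>2)\<close> at \<open>s\<close> lies above the graph, in multiplied-out form.\<close>
lemma sqrt_mult_le_tangent:
  assumes a: "a \<ge> 1" and s: "0 \<le> s" "s \<le> 1" and x: "0 \<le> x" "x \<le> 1"
  shows "sqrt (a - x\<^sup>2) * sqrt (a - s\<^sup>2) \<le> a - s * x"
proof -
  have "(a - s * x)\<^sup>2 - (a - x\<^sup>2) * (a - s\<^sup>2) = a * (s - x)\<^sup>2"
    by (simp add: power2_eq_square algebra_simps)
  then have "sqrt ((a - x\<^sup>2) * (a - s\<^sup>2)) \<le> sqrt ((a - s * x)\<^sup>2)"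
    using a by (intro real_sqrt_le_mono) (smt (verit) zero_le_power2 mult_nonneg_nonneg)
  moreover have "s * x \<le> 1" using s x by (metis mult_le_one)
  ultimately show ?thesis using a by (simp add: real_sqrt_mult)
qed

lemma tangent_line_expansion:
  fixes A B x p q s c :: real
  assumes "A \<noteq> 0" "B \<noteq> 0"
  shows "x * (1 - (p * s / A + q * s / B)) + (p / A + c * q / B)
    = x + p * ((1 - s * x) / A) + q * ((c - s * x) / B)"
  using assms by (simp add: field_simps)

lemma profile_le_tangent:
  assumes p: "p \<ge> 0" and q: "q \<ge> 0" and b: "b \<ge> 1"
    and s: "0 \<le> s" "s < 1" and x: "0 \<le> x" "x \<le> 1"
  shows "profile p q b x \<le> x * (1 - sigma_lhs p q b s) + tangent_intercept p q b s"
proof -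
  have b2: "b\<^sup>2 \<ge> 1" using b by (metis one_le_power)
  have A: "sqrt (1 - s\<^sup>2) > 0" and B: "sqrt (b\<^sup>2 - s\<^sup>2) > 0"
    using sqrt_diff_square_pos[of 1 s] sqrt_diff_square_pos[OF b2, of s] s by auto
  have "p * sqrt (1 - x\<^sup>2) \<le> p * ((1 - s * x) / sqrt (1 - s\<^sup>2))"
    using sqrt_mult_le_tangent[of 1 s x] s x A p by (intro mult_left_mono) (simp_all add: divide_simps)
  moreover have "q * sqrt (b\<^sup>2 - x\<^sup>2) \<le> q * ((b\<^sup>2 - s * x) / sqrt (b\<^sup>2 - s\<^sup>2))"
    using sqrt_mult_le_tangent[OF b2, of s x] s x B q by (intro mult_left_mono) (simp_all add: divide_simps)
  ultimately show ?thesis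
    unfolding sigma_lhs_def tangent_intercept_def profile_def
      tangent_line_expansion[OF A[THEN less_imp_neq, symmetric] B[THEN less_imp_neq, symmetric]]
    by linarith
qed

lemma profile_eq_tangent:
  assumes b: "b \<ge> 1" and s: "0 \<le> s" "s < 1"
  shows "profile p q b s = s * (1 - sigma_lhs p q b s) + tangent_intercept p q b s"
proof -
  have b2: "b\<^sup>2 \<ge> 1" using b by (metis one_le_power)
  have A: "sqrt (1 - s\<^sup>2) > 0" and B: "sqrt (b\<^sup>2 - s\<^sup>2) > 0"
    using sqrt_diff_square_pos[of 1 s] sqrt_diff_square_pos[OF b2, of s] s by auto
  have "(1 - s * s) / sqrt (1 - s\<^sup>2) = sqrt (1 - s\<^sup>2)"
    and "(b\<^sup>2 - s * s) / sqrt (b\<^sup>2 - s\<^sup>2) = sqrt (b\<^sup>2 - s\<^sup>2)"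
    using A B by (simp_all add: divide_simps power2_eq_square)
  then show ?thesis
    unfolding sigma_lhs_def tangent_intercept_def profile_def
      tangent_line_expansion[OF A[THEN less_imp_neq, symmetric] B[THEN less_imp_neq, symmetric]]
    by simp
qed

lemma peak_eq_profile:
  assumes "p \<ge> 1" "q \<ge> 0" "b \<ge> 1"
  shows "peak p q b = profile p q b (crit_point p q b)"
  using profile_eq_tangent[of b "crit_point p q b" p q] crit_point[OF assms] assms
  unfolding peak_def by simp

lemma profile_le_peak:
  assumes "p \<ge> 1" "q \<ge> 0" "b \<ge> 1" "0 \<le> x" "x \<le> 1"
  shows "profile p q b x \<le> peak p q b"
  using profile_le_tangent[of p q b "crit_point p q b" x] crit_point[of p q b] assms
  unfolding peak_def by simp

lemma peak_le_tangent_intercept: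
  assumes p: "p \<ge> 1" and q: "q \<ge> 0" and b: "b \<ge> 1" and s: "0 \<le> s" "s < 1"
    and h: "sigma_lhs p q b s \<ge> 1"
  shows "peak p q b \<le> tangent_intercept p q b s"
proof -
  have "peak p q b \<le> crit_point p q b * (1 - sigma_lhs p q b s) + tangent_intercept p q b s"
    using profile_le_tangent[of p q b s "crit_point p q b"] crit_point[OF p q b] assms
      peak_eq_profile[OF p q b] by simp
  moreover have "crit_point p q b * (1 - sigma_lhs p q b s) \<le> 0"
    using crit_point[OF p q b] h by (simp add: mult_nonneg_nonpos)
  ultimately show ?thesis by linarith
qed

lemma crit_point_le:
  assumes p: "p \<ge> 1" and q: "q \<ge> 0" and b: "b \<ge> 1" and s: "0 \<le> s" "s < 1"
    and h: "sigma_lhs p q b s \<ge> 1"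
  shows "crit_point p q b \<le> s"
  using sigma_lhs_strict_mono[of p q b s "crit_point p q b"] crit_point[OF p q b] assms
  by (cases "s < crit_point p q b") auto

lemma profile_diff:
  "profile p q b' x - profile p q b x = q * (sqrt (b'\<^sup>2 - x\<^sup>2) - sqrt (b\<^sup>2 - x\<^sup>2))"
  unfolding profile_def by (simp add: algebra_simps)

lemma peak_diff_bounds:
  assumes p: "p \<ge> 1" and q: "q \<ge> 0" and b: "1 \<le> b" "b \<le> b'"
  shows "q * (sqrt (b'\<^sup>2 - (crit_point p q b)\<^sup>2) - sqrt (b\<^sup>2 - (crit_point p q b)\<^sup>2))
           \<le> peak p q b' - peak p q b"
    and "peak p q b' - peak p q b
           \<le> q * (sqrt (b'\<^sup>2 - (crit_point p q b')\<^sup>2) - sqrt (b\<^sup>2 - (crit_point p q b')\<^sup>2))"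
proof -
  have "0 < crit_point p q b" "crit_point p q b < 1" "0 < crit_point p q b'" "crit_point p q b' < 1"
    using crit_point[of p q b] crit_point[of p q b'] assms by auto
  then have "profile p q b' (crit_point p q b) \<le> peak p q b'"
    and "profile p q b (crit_point p q b') \<le> peak p q b"
    using profile_le_peak assms by auto
  moreover have "peak p q b = profile p q b (crit_point p q b)"
    and "peak p q b' = profile p q b' (crit_point p q b')"
    using peak_eq_profile assms by auto
  moreover note profile_diff[of p q b' "crit_point p q b" b] profile_diff[of p q b' "crit_point p q b'" b]
  ultimately show "q * (sqrt (b'\<^sup>2 - (crit_point p q b)\<^sup>2) - sqrt (b\<^sup>2 - (crit_point p q b)\<^sup>2))
           \<le> peak p q b' - peak p q b"
    and "peak p q b' - peak p q b
           \<le> q * (sqrt (b'\<^sup>2 - (crit_point p q b')\<^sup>2) - sqrt (b\<^sup>2 - (crit_point p q b')\<^sup>2))"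
    by linarith+
qed

lemma peak_strict_mono:
  assumes p: "p \<ge> 1" and q: "q > 0" and b: "1 \<le> b" "b < b'"
  shows "peak p q b < peak p q b'"
proof -
  have "b\<^sup>2 < b'\<^sup>2" using b by (intro power_strict_mono) auto
  then have "0 < q * (sqrt (b'\<^sup>2 - (crit_point p q b)\<^sup>2) - sqrt (b\<^sup>2 - (crit_point p q b)\<^sup>2))"
    using q by simp
  then show ?thesis using peak_diff_bounds(1)[of p q b b'] assms by linarith
qed

lemma peak_hoelder:
  assumes p: "p \<ge> 1" and q: "q \<ge> 0" and b: "1 \<le> b" "b \<le> b'" "b' \<le> 2"
  shows "\<bar>peak p q b' - peak p q b\<bar> \<le> 2 * q * sqrt (b' - b)"
proof -
  define a where "a = crit_point p q b"
  define c where "c = crit_point p q b'"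
  have bb: "1 \<le> b\<^sup>2" "b\<^sup>2 \<le> b'\<^sup>2" using b by (auto intro: power_mono simp: one_le_power)
  have "c\<^sup>2 \<le> 1" using crit_point[of p q b'] assms unfolding c_def by (simp add: power_le_one)
  then have "sqrt ((b\<^sup>2 - c\<^sup>2) + (b'\<^sup>2 - b\<^sup>2)) \<le> sqrt (b\<^sup>2 - c\<^sup>2) + sqrt (b'\<^sup>2 - b\<^sup>2)"
    using bb by (intro sqrt_add_le_add_sqrt) auto
  then have root_incr: "sqrt (b'\<^sup>2 - c\<^sup>2) - sqrt (b\<^sup>2 - c\<^sup>2) \<le> sqrt (b'\<^sup>2 - b\<^sup>2)" by simp
  have "b'\<^sup>2 - b\<^sup>2 = (b' - b) * (b' + b)" by (simp add: power2_eq_square algebra_simps)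
  also have "\<dots> \<le> (b' - b) * 2\<^sup>2" using b by (intro mult_left_mono) auto
  finally have "sqrt (b'\<^sup>2 - b\<^sup>2) \<le> sqrt ((b' - b) * 2\<^sup>2)" by (rule real_sqrt_le_mono)
  also have "\<dots> = 2 * sqrt (b' - b)" by (simp only: real_sqrt_mult real_sqrt_abs)
  finally have "q * (sqrt (b'\<^sup>2 - c\<^sup>2) - sqrt (b\<^sup>2 - c\<^sup>2)) \<le> q * (2 * sqrt (b' - b))"
    using root_incr q by (intro mult_left_mono) auto
  then have upper: "peak p q b' - peak p q b \<le> 2 * q * sqrt (b' - b)"
    using peak_diff_bounds(2)[OF p q b(1,2)] unfolding c_def by simp
  have "0 \<le> q * (sqrt (b'\<^sup>2 - a\<^sup>2) - sqrt (b\<^sup>2 - a\<^sup>2))" using q bb by simp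
  then have "0 \<le> peak p q b' - peak p q b"
    using peak_diff_bounds(1)[OF p q b(1,2)] unfolding a_def by linarith
  then show ?thesis using upper by simp
qed

lemma continuous_on_hoelder:
  fixes f :: "real \<Rightarrow> real"
  assumes K: "K \<ge> 0" and bound: "\<And>x y. x \<in> S \<Longrightarrow> y \<in> S \<Longrightarrow> \<bar>f y - f x\<bar> \<le> K * sqrt \<bar>y - x\<bar>"
  shows "continuous_on S f"
  unfolding continuous_on_iff
proof (intro ballI allI impI)
  fix x e :: real assume x: "x \<in> S" and e: "0 < e"
  define d where "d = (e / (K + 1))\<^sup>2"
  show "\<exists>d>0. \<forall>y\<in>S. dist y x < d \<longrightarrow> dist (f y) (f x) < e"
  proof (intro exI[of _ d] conjI ballI impI)
    show "d > 0" unfolding d_def using e K by simp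
    fix y assume y: "y \<in> S" and "dist y x < d"
    then have "sqrt \<bar>y - x\<bar> < e / (K + 1)"
      using e K real_sqrt_less_mono[of "\<bar>y - x\<bar>" d] unfolding d_def by (simp add: dist_real_def)
    then have "(K + 1) * sqrt \<bar>y - x\<bar> < e" using K by (simp add: field_simps)
    moreover have "\<bar>f y - f x\<bar> \<le> (K + 1) * sqrt \<bar>y - x\<bar>"
      using bound[OF x y] mult_right_mono[of K "K + 1" "sqrt \<bar>y - x\<bar>"] by simp
    ultimately show "dist (f y) (f x) < e" by (simp add: dist_real_def)
  qed
qed

lemma continuous_on_peak:
  assumes "p \<ge> 1" "q \<ge> 0"
  shows "continuous_on {1..2} (peak p q)"
proof (rule continuous_on_hoelder[of "2 * q"])
  fix x y :: real assume "x \<in> {1..2}" "y \<in> {1..2}"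
  then show "\<bar>peak p q y - peak p q x\<bar> \<le> 2 * q * sqrt \<bar>y - x\<bar>"
    using peak_hoelder[of p q x y] peak_hoelder[of p q y x] assms
    by (cases "x \<le> y") (auto simp: abs_minus_commute)
qed (use assms in simp)

lemma l_fun_eq_peak: "l_fun t b = peak (p_fun t) (q_fun t) b - t - sqrt 2"
  unfolding l_fun_def peak_def tangent_intercept_def sigma_hat_def crit_point_def sigma_lhs_def
  by simp

lemma peak_1_0:
  assumes "b \<ge> 1"
  shows "peak 1 0 b = sqrt 2"
proof -
  define s where "s = (sqrt (1/2) :: real)"
  have s: "0 < s" "s < 1" "sqrt (1 - s\<^sup>2) = s" "1 / s = sqrt 2" "s + s = sqrt 2"
    unfolding s_def by (auto simp: real_sqrt_divide field_simps)
  have "profile 1 0 b s \<le> peak 1 0 b" using profile_le_peak[of 1 0 b s] assms s by simp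
  moreover have "peak 1 0 b \<le> tangent_intercept 1 0 b s"
    using peak_le_tangent_intercept[of 1 0 b s] assms s unfolding sigma_lhs_def by simp
  ultimately show ?thesis using s unfolding profile_def tangent_intercept_def by simp
qed

lemma delta_0_eq:
  assumes "b \<ge> 1"
  shows "delta_fun 0 b = peak 2 1 b - 2 - sqrt 2"
  using peak_1_0[OF assms] unfolding delta_fun_def l_fun_eq_peak
  by (simp add: q_fun_def p_fun_def)

lemma delta_1_eq: "delta_fun 1 b = peak 3 2 b - peak 2 1 b - 2"
  unfolding delta_fun_def l_fun_eq_peak by (simp add: q_fun_def p_fun_def)

lemma sqrt_diff_eq:
  assumes "0 \<le> v" "v < u"
  shows "sqrt u - sqrt v = (u - v) / (sqrt u + sqrt v)"
proof -
  have "(sqrt u - sqrt v) * (sqrt u + sqrt v) = u - v"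
    using assms by (simp add: algebra_simps power2_eq_square[symmetric])
  moreover have "sqrt u + sqrt v > 0" using assms by (simp add: add_pos_nonneg)
  ultimately show ?thesis by (simp add: divide_simps)
qed

text \<open>Both increments equal \<open>(b'\<^sup>2 - b\<^sup>2)\<close> divided by a sum of two roots; for \<open>c \<le> 1/2\<close> that
  sum exceeds \<open>(b' + b)/2\<close>, which in turn bounds half the sum for \<open>a\<close>.\<close>
lemma sqrt_increment_lt_twice:
  assumes b: "1 \<le> b" "b < b'" and a: "0 \<le> a" "a \<le> 1" and c: "0 \<le> c" "c \<le> 1/2"
  shows "sqrt (b'\<^sup>2 - c\<^sup>2) - sqrt (b\<^sup>2 - c\<^sup>2) < 2 * (sqrt (b'\<^sup>2 - a\<^sup>2) - sqrt (b\<^sup>2 - a\<^sup>2))"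
proof -
  have bb: "1 \<le> b\<^sup>2" "b\<^sup>2 < b'\<^sup>2" using b by (auto intro: power_strict_mono simp: one_le_power)
  have a2: "a\<^sup>2 \<le> 1" using a by (simp add: power_le_one)
  have c2: "c\<^sup>2 \<le> 1/4" using c power_mono[of c "1/2" 2] by (simp add: power_divide)
  define Sa where "Sa = sqrt (b'\<^sup>2 - a\<^sup>2) + sqrt (b\<^sup>2 - a\<^sup>2)"
  define Sc where "Sc = sqrt (b'\<^sup>2 - c\<^sup>2) + sqrt (b\<^sup>2 - c\<^sup>2)"
  have Sa_le: "Sa \<le> b' + b"
    using real_sqrt_le_mono[of "b'\<^sup>2 - a\<^sup>2" "b'\<^sup>2"] real_sqrt_le_mono[of "b\<^sup>2 - a\<^sup>2" "b\<^sup>2"] b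
    unfolding Sa_def by simp
  have "b' / 2 < sqrt (b'\<^sup>2 - c\<^sup>2)"
    using bb c2 by (intro real_less_rsqrt) (simp add: power_divide)
  moreover have "b / 2 < sqrt (b\<^sup>2 - c\<^sup>2)"
    using bb c2 by (intro real_less_rsqrt) (simp add: power_divide)
  ultimately have Sa_Sc: "Sa < 2 * Sc" using Sa_le unfolding Sc_def by simp
  have "Sa > 0" unfolding Sa_def using bb a2 by (intro add_pos_nonneg) auto
  then have "(b'\<^sup>2 - b\<^sup>2) / Sc < 2 * ((b'\<^sup>2 - b\<^sup>2) / Sa)"
    using mult_strict_left_mono[OF Sa_Sc, of "b'\<^sup>2 - b\<^sup>2"] Sa_Sc bb by (simp add: field_simps)
  moreover have "sqrt (b'\<^sup>2 - a\<^sup>2) - sqrt (b\<^sup>2 - a\<^sup>2) = (b'\<^sup>2 - b\<^sup>2) / Sa"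
    and "sqrt (b'\<^sup>2 - c\<^sup>2) - sqrt (b\<^sup>2 - c\<^sup>2) = (b'\<^sup>2 - b\<^sup>2) / Sc"
    unfolding Sa_def Sc_def using sqrt_diff_eq bb a2 c2 by auto
  ultimately show ?thesis by simp
qed

lemma crit_point_2_1_le_half:
  assumes "b \<ge> 1"
  shows "crit_point 2 1 b \<le> 1/2"
proof (rule crit_point_le)
  have "sqrt (b\<^sup>2 - (1/2)\<^sup>2) > 0" using assms by (intro sqrt_diff_square_pos) (auto simp: one_le_power)
  then have "0 \<le> 1 * (1/2) / sqrt (b\<^sup>2 - (1/2)\<^sup>2)" by simp
  moreover have "sqrt (3/4) < (1::real)" by simp
  then have "1 < 2 * (1/2) / sqrt (1 - (1/2)\<^sup>2 :: real)" by (simp add: power_divide)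
  ultimately show "1 \<le> sigma_lhs 2 1 b (1/2)" unfolding sigma_lhs_def by linarith
qed (use assms in auto)

lemma delta_0_strict_mono: "strict_mono_on {1..} (delta_fun 0)"
  by (rule strict_mono_onI) (simp add: delta_0_eq peak_strict_mono)

lemma delta_1_strict_mono: "strict_mono_on {1..} (delta_fun 1)"
proof (rule strict_mono_onI)
  fix b b' :: real assume "b \<in> {1..}" "b' \<in> {1..}" "b < b'"
  then have b: "1 \<le> b" "b < b'" by auto
  define a where "a = crit_point 3 2 b"
  define c where "c = crit_point 2 1 b'"
  have a: "0 < a" "a < 1" using crit_point[of 3 2 b] b unfolding a_def by auto
  have c: "0 < c" "c \<le> 1/2" using crit_point[of 2 1 b'] crit_point_2_1_le_half[of b'] b
    unfolding c_def by auto
  have "2 * (sqrt (b'\<^sup>2 - a\<^sup>2) - sqrt (b\<^sup>2 - a\<^sup>2)) \<le> peak 3 2 b' - peak 3 2 b"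
    using peak_diff_bounds(1)[of 3 2 b b'] b unfolding a_def by simp
  moreover have "peak 2 1 b' - peak 2 1 b \<le> sqrt (b'\<^sup>2 - c\<^sup>2) - sqrt (b\<^sup>2 - c\<^sup>2)"
    using peak_diff_bounds(2)[of 2 1 b b'] b unfolding c_def by simp
  ultimately show "delta_fun 1 b < delta_fun 1 b'"
    using sqrt_increment_lt_twice[OF b, of a c] a c unfolding delta_1_eq by simp
qed

lemma continuous_on_delta_0: "continuous_on {1..2} (delta_fun 0)"
proof -
  have "continuous_on {1..2} (\<lambda>b. peak 2 1 b - 2 - sqrt 2)"
    using continuous_on_peak[of 2 1] by (intro continuous_intros) auto
  then show ?thesis by (rule continuous_on_cong[THEN iffD1, rotated 2]) (auto simp: delta_0_eq)
qed

lemma continuous_on_delta_1: "continuous_on {1..2} (delta_fun 1)"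
  unfolding delta_1_eq using continuous_on_peak[of 2 1] continuous_on_peak[of 3 2]
  by (intro continuous_intros) auto

lemma beta_c_between:
  assumes mono: "strict_mono_on {1..} (delta_fun k)"
    and cont: "continuous_on {1..2} (delta_fun k)"
    and ac: "1 \<le> a" "a \<le> c" "c \<le> sqrt 2"
    and signs: "delta_fun k a < 0" "0 < delta_fun k c"
  shows "a < beta_c k \<and> beta_c k < c"
proof -
  have "sqrt 2 \<le> (2::real)" by (rule real_le_lsqrt) auto
  then have "continuous_on {a..c} (delta_fun k)" using cont ac by (rule_tac continuous_on_subset) auto
  then obtain r where r: "a \<le> r" "r \<le> c" "delta_fun k r = 0"
    using IVT'[of "delta_fun k" a 0 c] ac signs by auto
  then have r_between: "a < r" "r < c" using signs by (auto simp: order.order_iff_strict)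
  have "beta_c k = r" unfolding beta_c_def
  proof (rule the_equality)
    show "1 < r \<and> r < sqrt 2 \<and> delta_fun k r = 0" using r r_between ac by auto
    fix y assume "1 < y \<and> y < sqrt 2 \<and> delta_fun k y = 0"
    then show "y = r" using strict_mono_on_eqD[OF mono, of r y] r r_between ac by auto
  qed
  then show ?thesis using r_between by simp
qed

lemma sqrt_2_bounds: "1.4142 \<le> sqrt (2::real)" "sqrt (2::real) \<le> 1.4143"
  by (rule real_le_rsqrt real_le_lsqrt; simp add: power2_eq_square)+

lemma sqrt_3_halves: "1 < sqrt (3/2::real)" "sqrt (3/2::real) < sqrt 2" "(sqrt (3/2))\<^sup>2 = (3/2::real)"
  by auto

lemma peak_2_1_sqrt_3_halves_le: "peak 2 1 (sqrt (3/2)) \<le> 2 / 0.9415 + 3/2 / 1.1774"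
proof -
  define s :: real where "s = 0.337"
  have A: "0.9415 \<le> sqrt (1 - s\<^sup>2)" "sqrt (1 - s\<^sup>2) \<le> 0.9416"
      and B: "1.1774 \<le> sqrt (3/2 - s\<^sup>2)" "sqrt (3/2 - s\<^sup>2) \<le> 1.1775"
    by (rule real_le_rsqrt real_le_lsqrt; simp add: s_def power2_eq_square)+
  have "2 * s / 0.9416 \<le> 2 * s / sqrt (1 - s\<^sup>2)" "s / 1.1775 \<le> s / sqrt (3/2 - s\<^sup>2)"
    using A B by (intro frac_le; simp add: s_def power2_eq_square)+
  then have "1 \<le> sigma_lhs 2 1 (sqrt (3/2)) s"
    unfolding sigma_lhs_def sqrt_3_halves(3) by (simp add: s_def)
  then have "peak 2 1 (sqrt (3/2)) \<le> tangent_intercept 2 1 (sqrt (3/2)) s"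
    using sqrt_3_halves by (intro peak_le_tangent_intercept) (auto simp: s_def)
  also have "\<dots> \<le> 2 / 0.9415 + 3/2 / 1.1774"
    unfolding tangent_intercept_def sqrt_3_halves(3) using A B
    by (intro add_mono frac_le) auto
  finally show ?thesis .
qed

lemma delta_0_sqrt_3_halves_neg: "delta_fun 0 (sqrt (3/2)) < 0"
  using peak_2_1_sqrt_3_halves_le sqrt_2_bounds sqrt_3_halves by (simp add: delta_0_eq)

lemma delta_0_sqrt_2_pos: "delta_fun 0 (sqrt 2) > 0"
proof -
  define x :: real where "x = 0.35"
  have "0.9367 \<le> sqrt (1 - x\<^sup>2)" "1.3702 \<le> sqrt (2 - x\<^sup>2)"
    by (rule real_le_rsqrt; simp add: x_def power2_eq_square)+
  then have "2 + sqrt 2 < profile 2 1 (sqrt 2) x"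
    unfolding profile_def using sqrt_2_bounds by (simp add: x_def)
  also have "\<dots> \<le> peak 2 1 (sqrt 2)" by (rule profile_le_peak) (auto simp: x_def)
  finally show ?thesis by (simp add: delta_0_eq)
qed

lemma delta_1_one_neg: "delta_fun 1 1 < 0"
proof -
  define s :: real where "s = 0.197"
  have A: "0.9804 \<le> sqrt (1 - s\<^sup>2)" "sqrt (1 - s\<^sup>2) \<le> 0.9805"
    by (rule real_le_rsqrt real_le_lsqrt; simp add: s_def power2_eq_square)+
  have "5 * s / 0.9805 \<le> 5 * s / sqrt (1 - s\<^sup>2)"
    using A by (intro frac_le) (auto simp: s_def power2_eq_square)
  then have "1 \<le> sigma_lhs 3 2 1 s" unfolding sigma_lhs_def by (simp add: s_def add_divide_distrib[symmetric])
  then have "peak 3 2 1 \<le> tangent_intercept 3 2 1 s"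
    by (intro peak_le_tangent_intercept) (auto simp: s_def)
  also have "\<dots> = 5 / sqrt (1 - s\<^sup>2)" unfolding tangent_intercept_def by (simp add: add_divide_distrib[symmetric])
  also have "\<dots> \<le> 5 / 0.9804" using A by (intro frac_le) auto
  finally have upper: "peak 3 2 1 \<le> 5 / 0.9804" .
  define x :: real where "x = 0.316"
  have "0.9487 \<le> sqrt (1 - x\<^sup>2)" by (rule real_le_rsqrt; simp add: x_def power2_eq_square)+
  then have "x + 3 * 0.9487 \<le> profile 2 1 1 x" unfolding profile_def by simp
  also have "\<dots> \<le> peak 2 1 1" by (rule profile_le_peak) (auto simp: x_def)
  finally show ?thesis using upper unfolding delta_1_eq by (simp add: x_def)
qed

lemma delta_1_sqrt_3_halves_pos: "delta_fun 1 (sqrt (3/2)) > 0"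
proof -
  define x :: real where "x = 0.2115"
  have "0.9773 \<le> sqrt (1 - x\<^sup>2)" "1.2063 \<le> sqrt (3/2 - x\<^sup>2)"
    by (rule real_le_rsqrt; simp add: x_def power2_eq_square)+
  then have "x + 3 * 0.9773 + 2 * 1.2063 \<le> profile 3 2 (sqrt (3/2)) x"
    unfolding profile_def sqrt_3_halves(3) by simp
  also have "\<dots> \<le> peak 3 2 (sqrt (3/2))"
    using sqrt_3_halves by (intro profile_le_peak) (auto simp: x_def)
  finally show ?thesis
    using peak_2_1_sqrt_3_halves_le unfolding delta_1_eq by (simp add: x_def)
qed

theorem lemma3p14:
  shows "beta_c 1 < sqrt (3/2) \<and> sqrt (3/2) < beta_c 0"
proof
  show "beta_c 1 < sqrt (3/2)"
    using beta_c_between[OF delta_1_strict_mono continuous_on_delta_1, of 1 "sqrt (3/2)"]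
      delta_1_one_neg delta_1_sqrt_3_halves_pos sqrt_3_halves by auto
  show "sqrt (3/2) < beta_c 0"
    using beta_c_between[OF delta_0_strict_mono continuous_on_delta_0, of "sqrt (3/2)" "sqrt 2"]
      delta_0_sqrt_3_halves_neg delta_0_sqrt_2_pos sqrt_3_halves by auto
qed

end
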